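(* Let $n\ge 1$ be an integer. The game value of \textsc{Snort} played on the star $K_{1,n}$ with no tinted vertices is $\pm n = \{\, n \mid -n \,\}$.
   Context: \textsc{Snort} is a two-player normal-play combinatorial game (the player unable to move loses) between Left (blue) and Right (red), played on a finite simple graph in which each vertex may be tinted blue, tinted red, or untinted. Left may move on any vertex not tinted red; Right may move on any vertex not tinted blue. A move on vertex $v$ deletes $v$ and tints all neighbours of $v$ in the mover's colour; any vertex that thereby becomes tinted in both colours is deleted. Game values are in the standard sense of combinatorial game theory: $\{A \mid B\}$ denotes the game with Left options $A$ and Right options $B$, integers $n$ are the usual integer games, and $\pm G$ denotes $\{G \mid -G\}$. $K_{1,n}$ is the star with one centre vertex adjacent to $n$ leaves. *)

theory Defs
  imports Main
begin

datatype game = Game "game list" "game list"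

function game_le :: "game \<Rightarrow> game \<Rightarrow> bool" where
  "game_le (Game GL GR) (Game HL HR) \<longleftrightarrow>
     (\<forall>gl \<in> set GL. \<not> game_le (Game HL HR) gl) \<and>
     (\<forall>hr \<in> set HR. \<not> game_le hr (Game GL GR))"
  by pat_completeness auto
termination
  by (relation "measure (\<lambda>(G, H). size G + size H)")
     (auto dest!: size_list_estimation'[where f=size, OF _ order_refl])

definition game_eq :: "game \<Rightarrow> game \<Rightarrow> bool" where
  "game_eq G H \<longleftrightarrow> game_le G H \<and> game_le H G"

fun game_neg :: "game \<Rightarrow> game" where
  "game_neg (Game L R) = Game (map game_neg R) (map game_neg L)"

fun nat_game :: "nat \<Rightarrow> game" where
  "nat_game 0 = Game [] []"
| "nat_game (Suc n) = Game [nat_game n] []"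

definition int_game :: "int \<Rightarrow> game" where
  "int_game k = (if 0 \<le> k then nat_game (nat k) else game_neg (nat_game (nat (- k))))"

definition game_pm :: "game \<Rightarrow> game" where
  "game_pm G = Game [G] [game_neg G]"

datatype tint = Untinted | Blue | Red

text \<open>A Snort position: remaining vertex set V, the (symmetric, irreflexive)
  edge relation E of the original graph (restricted implicitly to V), and a tint
  for each vertex.  A Left move on v (v \<in> V, not tinted red) deletes v, tints its
  neighbours blue and deletes those neighbours that were red (they become tinted
  in both colours).\<close>

definition left_legal :: "nat set \<Rightarrow> (nat \<Rightarrow> tint) \<Rightarrow> nat \<Rightarrow> bool" where
  "left_legal V t v \<longleftrightarrow> v \<in> V \<and> t v \<noteq> Red"

definition right_legal :: "nat set \<Rightarrow> (nat \<Rightarrow> tint) \<Rightarrow> nat \<Rightarrow> bool" where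
  "right_legal V t v \<longleftrightarrow> v \<in> V \<and> t v \<noteq> Blue"

definition left_V :: "nat set \<Rightarrow> (nat \<times> nat) set \<Rightarrow> (nat \<Rightarrow> tint) \<Rightarrow> nat \<Rightarrow> nat set" where
  "left_V V E t v = V - {v} - {u \<in> V. (v, u) \<in> E \<and> t u = Red}"

definition left_t :: "(nat \<times> nat) set \<Rightarrow> (nat \<Rightarrow> tint) \<Rightarrow> nat \<Rightarrow> nat \<Rightarrow> tint" where
  "left_t E t v = (\<lambda>u. if (v, u) \<in> E then Blue else t u)"

definition right_V :: "nat set \<Rightarrow> (nat \<times> nat) set \<Rightarrow> (nat \<Rightarrow> tint) \<Rightarrow> nat \<Rightarrow> nat set" where
  "right_V V E t v = V - {v} - {u \<in> V. (v, u) \<in> E \<and> t u = Blue}"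

definition right_t :: "(nat \<times> nat) set \<Rightarrow> (nat \<Rightarrow> tint) \<Rightarrow> nat \<Rightarrow> nat \<Rightarrow> tint" where
  "right_t E t v = (\<lambda>u. if (v, u) \<in> E then Red else t u)"

text \<open>Game tree with a fuel parameter; every move deletes at least one vertex,
  so fuel card V suffices for a finite vertex set.\<close>
primrec snort_aux :: "nat \<Rightarrow> nat set \<Rightarrow> (nat \<times> nat) set \<Rightarrow> (nat \<Rightarrow> tint) \<Rightarrow> game" where
  "snort_aux 0 V E t = Game [] []"
| "snort_aux (Suc k) V E t =
     Game (map (\<lambda>v. snort_aux k (left_V V E t v) E (left_t E t v))
               (filter (left_legal V t) (sorted_list_of_set V)))
          (map (\<lambda>v. snort_aux k (right_V V E t v) E (right_t E t v))
               (filter (right_legal V t) (sorted_list_of_set V)))"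

definition snort :: "nat set \<Rightarrow> (nat \<times> nat) set \<Rightarrow> (nat \<Rightarrow> tint) \<Rightarrow> game" where
  "snort V E t = snort_aux (card V) V E t"

definition star_vertices :: "nat \<Rightarrow> nat set" where
  "star_vertices n = {0..n}"

definition star_edges :: "nat \<Rightarrow> (nat \<times> nat) set" where
  "star_edges n = {(0, i) | i. i \<in> {1..n}} \<union> {(i, 0) | i. i \<in> {1..n}}"

end

theory Submission
  imports Defs
begin

(* Let G be the star position.  Left's move on the centre deletes it and tints all
   n leaves blue; in the resulting position Left has n moves in hand and Right has
   none, so it is worth at least n.  Every option of G is a Snort position with n
   vertices, so its game tree has height at most n and its value lies between -n
   and n.  This gives {n | -n} <= G, and the colour-swapping symmetry of Snort (the
   star is untinted, so G = -G) turns this into G <= {n | -n}. *)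

lemma game_neg_neg [simp]: "game_neg (game_neg G) = G"
  by (induction G) (simp_all add: map_idI)

lemma game_le_neg_iff [simp]: "game_le (game_neg G) (game_neg H) \<longleftrightarrow> game_le H G"
  by (induction H G rule: game_le.induct) auto

lemma game_neg_pm [simp]: "game_neg (game_pm G) = game_pm G"
  by (simp add: game_pm_def)

fun game_height_le :: "nat \<Rightarrow> game \<Rightarrow> bool" where
  "game_height_le 0 (Game L R) \<longleftrightarrow> L = [] \<and> R = []"
| "game_height_le (Suc k) (Game L R) \<longleftrightarrow> (\<forall>G \<in> set L \<union> set R. game_height_le k G)"

lemma game_height_le_neg [simp]: "game_height_le k (game_neg G) \<longleftrightarrow> game_height_le k G"
  by (induction k G rule: game_height_le.induct) auto

lemma game_le_nat_game_if_height_le: "game_height_le k G \<Longrightarrow> game_le G (nat_game k)"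
proof (induction k G rule: game_height_le.induct)
  case (1 L R)
  then show ?case by simp
next
  case (2 k L R)
  have "\<not> game_le (nat_game (Suc k)) G" if "G \<in> set L" for G
    using 2 that by (cases G) auto
  then show ?case by simp
qed

lemma neg_nat_game_le_if_height_le: "game_height_le k G \<Longrightarrow> game_le (game_neg (nat_game k)) G"
  using game_le_nat_game_if_height_le[of k "game_neg G"] game_le_neg_iff[of "nat_game k" "game_neg G"]
  by simp

lemma nat_game_Suc_le_Game:
  assumes "G \<in> set L" "game_le (nat_game n) G"
  shows "game_le (nat_game (Suc n)) (Game L [])"
  using assms by (cases "nat_game n") auto

lemma game_pm_le_Game:
  assumes "G' \<in> set L" "game_le G G'" "\<forall>G'' \<in> set R. game_le (game_neg G) G''"
  shows "game_le (game_pm G) (Game L R)"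
proof -
  have "\<not> game_le (Game L R) G"
    using assms(1,2) by (cases G) auto
  moreover have "\<not> game_le G'' (game_pm G)" if "G'' \<in> set R" for G''
    using assms(3) that by (cases G'') (auto simp: game_pm_def)
  ultimately show ?thesis
    by (simp add: game_pm_def)
qed

fun tint_swap :: "tint \<Rightarrow> tint" where
  "tint_swap Untinted = Untinted"
| "tint_swap Blue = Red"
| "tint_swap Red = Blue"

lemma snort_moves_tint_swap:
  "left_legal V (tint_swap \<circ> t) = right_legal V t"
  "right_legal V (tint_swap \<circ> t) = left_legal V t"
  "left_V V E (tint_swap \<circ> t) v = right_V V E t v"
  "right_V V E (tint_swap \<circ> t) v = left_V V E t v"
  "left_t E (tint_swap \<circ> t) v = tint_swap \<circ> right_t E t v"
  "right_t E (tint_swap \<circ> t) v = tint_swap \<circ> left_t E t v"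
  by (auto simp: fun_eq_iff left_legal_def right_legal_def left_V_def right_V_def
      left_t_def right_t_def elim: tint_swap.elims)

lemma snort_aux_tint_swap:
  "snort_aux k V E (tint_swap \<circ> t) = game_neg (snort_aux k V E t)"
  by (induction k arbitrary: V t) (simp_all add: snort_moves_tint_swap)

lemma snort_tint_swap: "snort V E (tint_swap \<circ> t) = game_neg (snort V E t)"
  by (simp add: snort_def snort_aux_tint_swap)

lemma game_height_le_snort_aux: "game_height_le k (snort_aux k V E t)"
  by (induction k arbitrary: V t) auto

lemma snort_aux_Suc_left_option:
  assumes "snort_aux (Suc k) V E t = Game L R" "finite V" "v \<in> V" "t v \<noteq> Red"
  shows "snort_aux k (left_V V E t v) E (left_t E t v) \<in> set L"
  using assms by (auto simp: left_legal_def)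

lemma nat_game_card_le_snort_if_all_blue:
  assumes "finite V" "\<forall>u \<in> V. t u = Blue"
  shows "game_le (nat_game (card V)) (snort V E t)"
proof -
  have "game_le (nat_game k) (snort_aux k V E t)"
    if "finite V" "card V = k" "\<forall>u \<in> V. t u = Blue" for k V t
    using that
  proof (induction k arbitrary: V t)
    case 0
    then show ?case by simp
  next
    case (Suc k)
    then obtain v where v: "v \<in> V"
      by fastforce
    have "filter (right_legal V t) (sorted_list_of_set V) = []"
      using Suc.prems by (auto simp: filter_empty_conv right_legal_def)
    then obtain L where G: "snort_aux (Suc k) V E t = Game L []"
      by simp
    have "left_V V E t v = V - {v}"
      using Suc.prems by (auto simp: left_V_def)
    then have "snort_aux k (V - {v}) E (left_t E t v) \<in> set L"
      using snort_aux_Suc_left_option[OF G Suc.prems(1) v] v Suc.prems(3) by simp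
    moreover have "game_le (nat_game k) (snort_aux k (V - {v}) E (left_t E t v))"
      using Suc.IH[of "V - {v}" "left_t E t v"] Suc.prems v by (auto simp: left_t_def)
    ultimately show ?case
      unfolding G by (rule nat_game_Suc_le_Game)
  qed
  then show ?thesis
    using assms by (simp add: snort_def)
qed

theorem lemma3:
  fixes n :: nat
  assumes "n \<ge> 1"
  shows "game_eq (snort (star_vertices n) (star_edges n) (\<lambda>_. Untinted))
                 (game_pm (int_game (int n)))"
proof -
  let ?V = "star_vertices n" and ?E = "star_edges n" and ?t = "\<lambda>_::nat. Untinted"
  obtain L R where G: "snort_aux (Suc n) ?V ?E ?t = Game L R"
    using game.exhaust by blast
  have snort: "snort ?V ?E ?t = Game L R"
    using G by (simp add: snort_def star_vertices_def)
  have "left_V ?V ?E ?t 0 = {1..n}" "\<forall>u \<in> {1..n}. left_t ?E ?t 0 u = Blue"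
    by (auto simp: left_V_def left_t_def star_vertices_def star_edges_def)
  then have "snort_aux n {1..n} ?E (left_t ?E ?t 0) \<in> set L"
    and "game_le (nat_game n) (snort_aux n {1..n} ?E (left_t ?E ?t 0))"
    using snort_aux_Suc_left_option[OF G, of 0] nat_game_card_le_snort_if_all_blue[of "{1..n}"]
    by (auto simp: star_vertices_def snort_def)
  moreover have "\<forall>G \<in> set R. game_le (game_neg (nat_game n)) G"
    using game_height_le_snort_aux[of "Suc n" ?V ?E ?t]
    unfolding G by (simp add: neg_nat_game_le_if_height_le)
  ultimately have "game_le (game_pm (nat_game n)) (Game L R)"
    by (rule game_pm_le_Game)
  moreover have "game_neg (Game L R) = Game L R"
    using snort_tint_swap[of ?V ?E ?t] by (simp only: snort comp_def tint_swap.simps)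
  ultimately show ?thesis
    using game_le_neg_iff[of "Game L R" "game_pm (nat_game n)"]
    by (simp add: game_eq_def snort int_game_def)
qed

end
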